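(* Let $\mathscr D:\mathscr N=\mathscr N_1\cup\cdots\cup\mathscr N_k$ be a pairwise binary-sized decomposition of a chemical reaction network $\mathscr N$ with set of common complexes $\mathscr C_{\mathscr D}$. If $P: y-x_1-\cdots-x_q$ is a path in $\mathscr N$ such that $y\in\mathscr C_{\mathscr D}$ while $x_1,\dots,x_q\notin\mathscr C_{\mathscr D}$, then there is exactly one subnetwork $\mathscr N_i$ that contains $P$.
   Context: A CRN $\mathscr N=(\mathscr S,\mathscr C,\mathscr R)$ is viewed as a directed graph with vertex set the complexes $\mathscr C$ and arcs the reactions $\mathscr R$. A path is a path in the underlying undirected graph (consecutive complexes joined by a reaction in either direction); a subnetwork contains a path if each of its edges comes from a reaction of that subnetwork. A decomposition $\mathscr N=\mathscr N_1\cup\cdots\cup\mathscr N_k$ is given by a partition $\{\mathscr R_1,\dots,\mathscr R_k\}$ of $\mathscr R$, $k\ge2$; the subnetwork $\mathscr N_i$ has reaction set $\mathscr R_i$ and complex set $\mathscr C_i$ consisting of the complexes occurring in reactions of $\mathscr R_i$. The set $\mathscr C_{\mathscr D}$ of common complexes consists of all complexes lying in the complex sets of at least two distinct subnetworks; $d=|\mathscr C_{\mathscr D}|$. The decomposition is pairwise binary-sized (PBS) if there are integers $0\le b\le c\le d$ such that $|\mathscr C_i\cap\mathscr C_j|\in\{b,c\}$ for all $i\neq j$. *)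

theory Defs
  imports Main
begin

text \<open>A CRN is modelled by its complex set C and reaction set R (arcs between
complexes); species are left abstract (complexes are elements of a type 'c).\<close>

definition is_crn :: "'c set \<Rightarrow> ('c \<times> 'c) set \<Rightarrow> bool" where
  "is_crn C R \<longleftrightarrow> finite C \<and> R \<subseteq> C \<times> C \<and> (\<forall>(a,b)\<in>R. a \<noteq> b)
     \<and> (\<forall>c\<in>C. \<exists>(a,b)\<in>R. c = a \<or> c = b)"

definition complexes_of :: "('c \<times> 'c) set \<Rightarrow> 'c set" where
  "complexes_of Ri = fst ` Ri \<union> snd ` Ri"

definition is_decomposition :: "('c \<times> 'c) set \<Rightarrow> nat \<Rightarrow> (nat \<Rightarrow> ('c \<times> 'c) set) \<Rightarrow> bool" where
  "is_decomposition R k Rs \<longleftrightarrow> k \<ge> 2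
     \<and> (\<forall>i\<in>{1..k}. Rs i \<noteq> {})
     \<and> (\<forall>i\<in>{1..k}. \<forall>j\<in>{1..k}. i \<noteq> j \<longrightarrow> Rs i \<inter> Rs j = {})
     \<and> (\<Union>i\<in>{1..k}. Rs i) = R"

definition common_complexes :: "nat \<Rightarrow> (nat \<Rightarrow> ('c \<times> 'c) set) \<Rightarrow> 'c set" where
  "common_complexes k Rs = {z. \<exists>i\<in>{1..k}. \<exists>j\<in>{1..k}. i \<noteq> j
       \<and> z \<in> complexes_of (Rs i) \<and> z \<in> complexes_of (Rs j)}"

definition is_PBS :: "nat \<Rightarrow> (nat \<Rightarrow> ('c \<times> 'c) set) \<Rightarrow> bool" where
  "is_PBS k Rs \<longleftrightarrow> (\<exists>b c. b \<le> c \<and> c \<le> card (common_complexes k Rs)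
     \<and> (\<forall>i\<in>{1..k}. \<forall>j\<in>{1..k}. i \<noteq> j \<longrightarrow>
          card (complexes_of (Rs i) \<inter> complexes_of (Rs j)) \<in> {b, c}))"

text \<open>A path v0 - v1 - ... - vq (as the list of its vertices, q \<ge> 1) in the
underlying undirected graph of reaction set R: distinct vertices, consecutive
ones joined by a reaction in either direction.\<close>
definition is_path :: "('c \<times> 'c) set \<Rightarrow> 'c list \<Rightarrow> bool" where
  "is_path R vs \<longleftrightarrow> length vs \<ge> 2 \<and> distinct vs
     \<and> (\<forall>n < length vs - 1. (vs ! n, vs ! Suc n) \<in> R \<or> (vs ! Suc n, vs ! n) \<in> R)"

definition contains_path :: "('c \<times> 'c) set \<Rightarrow> 'c list \<Rightarrow> bool" where
  "contains_path Ri vs \<longleftrightarrow>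
     (\<forall>n < length vs - 1. (vs ! n, vs ! Suc n) \<in> Ri \<or> (vs ! Suc n, vs ! n) \<in> Ri)"

end

theory Submission
  imports Defs
begin

text \<open>Two consecutive edges of the path meet in a vertex that is not a common complex, so
  they come from the same subnetwork.  Hence the subnetwork of the first edge contains the
  whole path, and it is the only subnetwork containing that first edge.\<close>

definition adjacent :: "('c \<times> 'c) set \<Rightarrow> 'c \<Rightarrow> 'c \<Rightarrow> bool" where
  "adjacent Ri a b \<longleftrightarrow> (a, b) \<in> Ri \<or> (b, a) \<in> Ri"

lemma adjacent_sym: "adjacent Ri a b \<Longrightarrow> adjacent Ri b a"
  unfolding adjacent_def by blast

lemma contains_path_singleton [simp]: "contains_path Ri [a]"
  unfolding contains_path_def by simp

lemma is_path_imp_contains_path: "is_path R vs \<Longrightarrow> contains_path R vs"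
  unfolding is_path_def contains_path_def by blast

lemma adjacent_in_complexes_of:
  assumes "adjacent Ri a b"
  shows "a \<in> complexes_of Ri" "b \<in> complexes_of Ri"
  using assms unfolding adjacent_def complexes_of_def by (auto simp: rev_image_eqI)

lemma adjacent_decomposition:
  assumes "is_decomposition R k Rs" "adjacent R a b"
  obtains i where "i \<in> {1..k}" "adjacent (Rs i) a b"
  using assms unfolding is_decomposition_def adjacent_def by blast

lemma contains_path_Cons_Cons [simp]:
  "contains_path Ri (a # b # vs) \<longleftrightarrow> adjacent Ri a b \<and> contains_path Ri (b # vs)"
  unfolding contains_path_def adjacent_def
  by (auto simp: less_Suc_eq_0_disj)

lemma adjacent_subnetworks_eq:
  assumes "i \<in> {1..k}" "j \<in> {1..k}"
    and "adjacent (Rs i) a b" "adjacent (Rs j) b c"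
    and "b \<notin> common_complexes k Rs"
  shows "i = j"
  using assms adjacent_in_complexes_of(1)[OF assms(4)] adjacent_in_complexes_of(2)[OF assms(3)]
  unfolding common_complexes_def by blast

lemma contains_path_subnetwork_of_first_edge:
  assumes "is_decomposition R k Rs" "i \<in> {1..k}"
    and "adjacent (Rs i) a b" "contains_path R (b # vs)"
    and "\<forall>x\<in>set (b # vs). x \<notin> common_complexes k Rs"
  shows "contains_path (Rs i) (a # b # vs)"
  using assms(3-5)
proof (induction vs arbitrary: a b)
  case Nil
  then show ?case by simp
next
  case (Cons c vs)
  obtain j where j: "j \<in> {1..k}" "adjacent (Rs j) b c"
    using adjacent_decomposition[OF assms(1)] Cons.prems(2) by auto
  have "b \<notin> common_complexes k Rs"
    using Cons.prems(3) by simp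
  then have "i = j"
    using adjacent_subnetworks_eq[OF assms(2) j(1) Cons.prems(1) j(2)] by blast
  then have "contains_path (Rs i) (b # c # vs)"
    using Cons.IH j(2) Cons.prems(2,3) by simp
  then show ?case
    using Cons.prems(1) by simp
qed

theorem lemma2:
  fixes C :: "'c set" and R :: "('c \<times> 'c) set"
    and k :: nat and Rs :: "nat \<Rightarrow> ('c \<times> 'c) set"
    and y :: 'c and xs :: "'c list"
  assumes "is_crn C R"
    and "is_decomposition R k Rs"
    and "is_PBS k Rs"
    and "is_path R (y # xs)"
    and "y \<in> common_complexes k Rs"
    and "\<forall>x\<in>set xs. x \<notin> common_complexes k Rs"
  shows "\<exists>!i. i \<in> {1..k} \<and> contains_path (Rs i) (y # xs)"
proof -
  obtain x xs' where xs: "xs = x # xs'"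
    using assms(4) unfolding is_path_def by (cases xs) auto
  have path: "adjacent R y x" "contains_path R (x # xs')"
    using is_path_imp_contains_path[OF assms(4)] xs by simp_all
  obtain i where i: "i \<in> {1..k}" "adjacent (Rs i) y x"
    using adjacent_decomposition[OF assms(2) path(1)] .
  have x_not_common: "x \<notin> common_complexes k Rs"
    using assms(6) xs by simp
  show ?thesis
  proof (rule ex1I[of _ i])
    show "i \<in> {1..k} \<and> contains_path (Rs i) (y # xs)"
      using contains_path_subnetwork_of_first_edge[OF assms(2) i path(2)] assms(6) i(1) xs
      by simp
  next
    fix j assume "j \<in> {1..k} \<and> contains_path (Rs j) (y # xs)"
    then have "j \<in> {1..k}" "adjacent (Rs j) y x"
      using xs by simp_all
    then show "j = i"
      using adjacent_subnetworks_eq[OF _ i(1) _ adjacent_sym[OF i(2)] x_not_common] by blast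
  qed
qed

end
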